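(* Let $A\in\mathcal{C}_n$ and let $w\in\mathbb{R}^n$ be nonzero. Then $A$ is irreducible with respect to $ww^T$ if and only if there exists a zero $u$ of $A$ with $w^Tu\ne0$.
   Context: $\mathcal{C}_n$ denotes the cone of copositive matrices: real symmetric $n\times n$ matrices $A$ with $x^TAx\ge 0$ for all $x\in\mathbb{R}^n_+$. For a matrix $M$, $A$ is irreducible with respect to $M$ if there does not exist $\gamma>0$ with $A-\gamma M\in\mathcal{C}_n$ (for $M\ne0$). A zero of $A$ is a nonzero $u\in\mathbb{R}^n_+$ with $u^TAu=0$. *)

theory Defs
  imports "HOL-Analysis.Analysis"
begin

definition nonneg_vec :: "real^'n \<Rightarrow> bool" where
  "nonneg_vec x \<longleftrightarrow> (\<forall>i. 0 \<le> x $ i)"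

definition copositive :: "real^'n^'n \<Rightarrow> bool" where
  "copositive A \<longleftrightarrow> transpose A = A \<and> (\<forall>x. nonneg_vec x \<longrightarrow> x \<bullet> (A *v x) \<ge> 0)"

definition irreducible_wrt :: "real^'n^'n \<Rightarrow> real^'n^'n \<Rightarrow> bool" where
  "irreducible_wrt A M \<longleftrightarrow> \<not> (\<exists>\<gamma>>0. copositive (A - \<gamma> *\<^sub>R M))"

definition is_zero_of :: "real^'n^'n \<Rightarrow> real^'n \<Rightarrow> bool" where
  "is_zero_of A u \<longleftrightarrow> u \<noteq> 0 \<and> nonneg_vec u \<and> u \<bullet> (A *v u) = 0"

definition outer :: "real^'n \<Rightarrow> real^'n \<Rightarrow> real^'n^'n" where
  "outer v w = (\<chi> i j. v $ i * w $ j)"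

end

theory Submission
  imports Defs
begin

text \<open>
  The easy direction: a zero u with w \<bullet> u \<noteq> 0 gives u \<bullet> ((A - \<gamma> w w^T) u) = -\<gamma> (w \<bullet> u)^2 < 0.
  Conversely, if every zero of A is orthogonal to w, one shows c (w \<bullet> x)^2 \<le> x \<bullet> A x on each
  face of the orthant by induction on its dimension. On a face without zeros of A the form
  is strictly positive, so by compactness of the unit sphere it dominates c |x|^2. On a face
  containing a zero y, subtracting from x the largest multiple s y that keeps it nonnegative
  moves x to a smaller face without changing w \<bullet> x (as w \<bullet> y = 0) and without increasing
  the form (as A y \<ge> 0 componentwise at a zero y).
\<close>

definition orthant_face :: "'n set \<Rightarrow> (real^'n) set" where
  "orthant_face F = {x. nonneg_vec x \<and> (\<forall>i\<in>F. x $ i = 0)}"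

definition square_dominated_on :: "(real^'n) set \<Rightarrow> real^'n^'n \<Rightarrow> real^'n \<Rightarrow> bool" where
  "square_dominated_on S A w \<longleftrightarrow> (\<exists>c>0. \<forall>x\<in>S. c * (w \<bullet> x)\<^sup>2 \<le> x \<bullet> (A *v x))"

lemma inner_matrix_vector_symmetric:
  fixes A :: "real^'n^'n"
  assumes "transpose A = A"
  shows "x \<bullet> (A *v y) = y \<bullet> (A *v x)"
proof -
  have "x \<bullet> (A *v y) = (transpose A *v x) \<bullet> y"
    by (simp add: dot_lmul_matrix transpose_matrix_vector)
  with assms show ?thesis by (simp add: inner_commute)
qed

lemma quadratic_form_add_scaleR:
  fixes A :: "real^'n^'n"
  assumes "transpose A = A"
  shows "(x + t *\<^sub>R y) \<bullet> (A *v (x + t *\<^sub>R y))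
         = x \<bullet> (A *v x) + 2 * t * (y \<bullet> (A *v x)) + t\<^sup>2 * (y \<bullet> (A *v y))"
  using inner_matrix_vector_symmetric[OF assms, of x y]
  by (simp add: matrix_vector_right_distrib matrix_vector_mult_scaleR inner_add_left
      inner_add_right algebra_simps power2_eq_square)

lemma quadratic_form_minus_outer:
  "x \<bullet> ((A - c *\<^sub>R outer w w) *v x) = x \<bullet> (A *v x) - c * (w \<bullet> x)\<^sup>2"
  by (simp add: outer_def matrix_vector_mult_def inner_vec_def sum_distrib_left sum_subtractf
      power2_eq_square algebra_simps sum_product)

lemma transpose_outer_self: "transpose (outer w w) = outer w w"
  by (simp add: vec_eq_iff outer_def transpose_def)

lemma copositive_minus_outer_iff:
  fixes A :: "real^'n^'n"
  assumes "copositive A"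
  shows "copositive (A - c *\<^sub>R outer w w)
           \<longleftrightarrow> (\<forall>x. nonneg_vec x \<longrightarrow> c * (w \<bullet> x)\<^sup>2 \<le> x \<bullet> (A *v x))"
proof -
  have "transpose (A - c *\<^sub>R outer w w) = A - c *\<^sub>R outer w w"
    using assms transpose_outer_self[of w]
    by (simp add: copositive_def transpose_def vec_eq_iff)
  then show ?thesis
    by (simp add: copositive_def quadratic_form_minus_outer)
qed

lemma nonneg_if_quadratic_nonneg_at_right:
  fixes a d :: real
  assumes "\<And>t. t > 0 \<Longrightarrow> 0 \<le> 2 * t * a + t\<^sup>2 * d"
  shows "0 \<le> a"
proof (rule ccontr)
  assume neg: "\<not> 0 \<le> a"
  define t where "t = - a / (\<bar>d\<bar> + 1)"
  have "t > 0" using neg by (simp add: t_def divide_neg_pos add_nonneg_pos)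
  have "t * \<bar>d\<bar> < -a"
    using neg unfolding t_def by (simp add: field_simps add_nonneg_pos)
  moreover have "t * d \<le> t * \<bar>d\<bar>"
    using \<open>t > 0\<close> by (intro mult_left_mono) auto
  ultimately have "2 * a + t * d < 0"
    using neg by linarith
  then have "t * (2 * a + t * d) < 0"
    using \<open>t > 0\<close> by (rule mult_pos_neg[rotated])
  with assms[OF \<open>t > 0\<close>] show False
    by (simp add: power2_eq_square algebra_simps)
qed

lemma copositive_zero_matrix_vector_nonneg:
  fixes A :: "real^'n^'n"
  assumes "copositive A" and "nonneg_vec y" and "y \<bullet> (A *v y) = 0"
  shows "0 \<le> (A *v y) $ i"
proof (rule nonneg_if_quadratic_nonneg_at_right)
  fix t :: real assume "t > 0"
  let ?e = "axis i (1::real)"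
  have "nonneg_vec (y + t *\<^sub>R ?e)"
    using assms(2) \<open>t > 0\<close> by (auto simp: nonneg_vec_def axis_def)
  then have "0 \<le> (y + t *\<^sub>R ?e) \<bullet> (A *v (y + t *\<^sub>R ?e))"
    using assms(1) by (simp add: copositive_def)
  also have "\<dots> = 2 * t * (A *v y) $ i + t\<^sup>2 * (?e \<bullet> (A *v ?e))"
    using quadratic_form_add_scaleR[of A y t ?e] assms(1,3)
    by (simp add: copositive_def inner_axis')
  finally show "0 \<le> 2 * t * (A *v y) $ i + t\<^sup>2 * (?e \<bullet> (A *v ?e))" .
qed

lemma copositive_zero_bilinear_nonneg:
  fixes A :: "real^'n^'n"
  assumes "copositive A" and "nonneg_vec y" and "y \<bullet> (A *v y) = 0" and "nonneg_vec x"
  shows "0 \<le> x \<bullet> (A *v y)"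
  unfolding inner_vec_def
  using assms copositive_zero_matrix_vector_nonneg[OF assms(1-3)]
  by (intro sum_nonneg) (simp add: nonneg_vec_def)

lemma quadratic_form_diff_zero_le:
  fixes A :: "real^'n^'n"
  assumes "copositive A" and "nonneg_vec y" and "y \<bullet> (A *v y) = 0"
    and "nonneg_vec x" and "0 \<le> s"
  shows "(x - s *\<^sub>R y) \<bullet> (A *v (x - s *\<^sub>R y)) \<le> x \<bullet> (A *v x)"
proof -
  have sym: "transpose A = A" using assms(1) by (simp add: copositive_def)
  have "0 \<le> y \<bullet> (A *v x)"
    using copositive_zero_bilinear_nonneg[OF assms(1-4)] inner_matrix_vector_symmetric[OF sym]
    by simp
  with quadratic_form_add_scaleR[OF sym, of x "- s" y] assms(3,5) show ?thesis
    by (simp add: mult_nonneg_nonneg)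
qed

lemma closed_orthant_face: "closed (orthant_face F)"
proof -
  have "orthant_face F = (\<Inter>i. {x. 0 \<le> x $ i}) \<inter> (\<Inter>i\<in>F. {x. x $ i = 0})"
    by (auto simp: orthant_face_def nonneg_vec_def)
  then show ?thesis
    by (simp add: closed_INT closed_Int closed_Collect_le closed_Collect_eq continuous_on_const
        continuous_on_component continuous_on_id)
qed

lemma cone_orthant_face: "cone (orthant_face F)"
  by (auto simp: cone_def orthant_face_def nonneg_vec_def)

lemma nonneg_shift_to_boundary:
  fixes x y :: "real^'n"
  assumes "nonneg_vec x" and "nonneg_vec y" and "y \<noteq> 0"
  obtains s i where "0 \<le> s" and "0 < y $ i" and "nonneg_vec (x - s *\<^sub>R y)"
    and "(x - s *\<^sub>R y) $ i = 0"
proof -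
  define S where "S = {j. 0 < y $ j}"
  have "S \<noteq> {}"
    using assms(2,3) by (auto simp: S_def nonneg_vec_def vec_eq_iff less_eq_real_def)
  define s where "s = Min ((\<lambda>j. x $ j / y $ j) ` S)"
  have "s \<in> (\<lambda>j. x $ j / y $ j) ` S"
    unfolding s_def using \<open>S \<noteq> {}\<close> by (intro Min_in) auto
  then obtain i where "i \<in> S" and s: "s = x $ i / y $ i" by auto
  have "nonneg_vec (x - s *\<^sub>R y)"
    unfolding nonneg_vec_def
  proof
    fix j
    show "0 \<le> (x - s *\<^sub>R y) $ j"
    proof (cases "j \<in> S")
      case True
      then have "s \<le> x $ j / y $ j" by (simp add: s_def)
      with True show ?thesis by (simp add: S_def pos_le_divide_eq)
    next
      case False
      then have "y $ j = 0" using assms(2) by (auto simp: S_def nonneg_vec_def less_eq_real_def)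
      with assms(1) show ?thesis by (simp add: nonneg_vec_def)
    qed
  qed
  moreover have "0 \<le> s" using \<open>i \<in> S\<close> assms(1) by (simp add: s S_def nonneg_vec_def)
  ultimately show ?thesis
    using that \<open>i \<in> S\<close> by (simp add: S_def s)
qed

lemma quadratic_form_coercive_on_closed_cone:
  fixes A :: "real^'n^'n"
  assumes "closed S" and "cone S" and pos: "\<And>x. x \<in> S \<Longrightarrow> x \<noteq> 0 \<Longrightarrow> 0 < x \<bullet> (A *v x)"
  obtains c where "c > 0" and "\<And>x. x \<in> S \<Longrightarrow> c * (norm x)\<^sup>2 \<le> x \<bullet> (A *v x)"
proof (cases "S \<subseteq> {0}")
  case True
  then show ?thesis by (intro that[of 1]) auto
next
  case False
  then obtain x0 where "x0 \<in> S" "x0 \<noteq> 0" by auto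
  let ?K = "S \<inter> sphere 0 1"
  have normalize: "(1 / norm x) *\<^sub>R x \<in> ?K" if "x \<in> S" "x \<noteq> 0" for x
    using that \<open>cone S\<close> by (simp add: cone_def)
  have "compact ?K" using \<open>closed S\<close> by (intro closed_Int_compact) auto
  moreover have "?K \<noteq> {}" using normalize[OF \<open>x0 \<in> S\<close> \<open>x0 \<noteq> 0\<close>] by blast
  moreover have "continuous_on ?K (\<lambda>y. y \<bullet> (A *v y))"
    by (intro continuous_intros linear_continuous_on matrix_vector_mul_linear)
  ultimately have "\<exists>y0\<in>?K. \<forall>y\<in>?K. y0 \<bullet> (A *v y0) \<le> y \<bullet> (A *v y)"
    by (rule continuous_attains_inf)
  then obtain y0 where "y0 \<in> ?K" and min: "\<And>y. y \<in> ?K \<Longrightarrow> y0 \<bullet> (A *v y0) \<le> y \<bullet> (A *v y)"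
    by blast
  then have "y0 \<in> S" and "y0 \<noteq> 0" by auto
  show ?thesis
  proof (rule that)
    show "y0 \<bullet> (A *v y0) > 0" using pos[OF \<open>y0 \<in> S\<close> \<open>y0 \<noteq> 0\<close>] .
    fix x assume "x \<in> S"
    show "y0 \<bullet> (A *v y0) * (norm x)\<^sup>2 \<le> x \<bullet> (A *v x)"
    proof (cases "x = 0")
      case False
      let ?z = "(1 / norm x) *\<^sub>R x"
      have "y0 \<bullet> (A *v y0) \<le> ?z \<bullet> (A *v ?z)" using min normalize \<open>x \<in> S\<close> False by blast
      also have "\<dots> = (x \<bullet> (A *v x)) / (norm x)\<^sup>2"
        by (simp add: matrix_vector_mult_scaleR power2_eq_square)
      finally show ?thesis using False by (simp add: pos_le_divide_eq mult.commute)
    qed simp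
  qed
qed

lemma square_dominated_on_cone_of_positive:
  fixes A :: "real^'n^'n"
  assumes "closed S" and "cone S" and "\<And>x. x \<in> S \<Longrightarrow> x \<noteq> 0 \<Longrightarrow> 0 < x \<bullet> (A *v x)"
  shows "square_dominated_on S A w"
proof -
  obtain c where "c > 0" and c: "\<And>x. x \<in> S \<Longrightarrow> c * (norm x)\<^sup>2 \<le> x \<bullet> (A *v x)"
    using quadratic_form_coercive_on_closed_cone[OF assms] by blast
  have "(norm w)\<^sup>2 + 1 > 0" by (rule add_nonneg_pos) auto
  define c' where "c' = c / ((norm w)\<^sup>2 + 1)"
  have "c' > 0" using \<open>c > 0\<close> \<open>(norm w)\<^sup>2 + 1 > 0\<close> by (simp add: c'_def)
  moreover have "c' * (w \<bullet> x)\<^sup>2 \<le> x \<bullet> (A *v x)" if "x \<in> S" for x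
  proof -
    have "(w \<bullet> x)\<^sup>2 \<le> (norm w * norm x)\<^sup>2"
      using Cauchy_Schwarz_ineq2[of w x] by (metis abs_ge_zero power2_abs power_mono)
    also have "\<dots> \<le> ((norm w)\<^sup>2 + 1) * (norm x)\<^sup>2"
      unfolding power_mult_distrib by (intro mult_right_mono) auto
    finally have "c' * (w \<bullet> x)\<^sup>2 \<le> c' * (((norm w)\<^sup>2 + 1) * (norm x)\<^sup>2)"
      using \<open>c' > 0\<close> by simp
    also have "\<dots> = c * (norm x)\<^sup>2"
      using \<open>(norm w)\<^sup>2 + 1 > 0\<close> by (simp add: c'_def)
    also have "\<dots> \<le> x \<bullet> (A *v x)"
      using c[OF that] .
    finally show ?thesis .
  qed
  ultimately show ?thesis unfolding square_dominated_on_def by blast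
qed

lemma square_dominated_on_face_without_zeros:
  fixes A :: "real^'n^'n"
  assumes "copositive A" and "\<And>x. x \<in> orthant_face F \<Longrightarrow> x \<bullet> (A *v x) = 0 \<Longrightarrow> x = 0"
  shows "square_dominated_on (orthant_face F) A w"
proof (rule square_dominated_on_cone_of_positive[OF closed_orthant_face cone_orthant_face])
  fix x assume "x \<in> orthant_face F" and "x \<noteq> 0"
  then have "0 \<le> x \<bullet> (A *v x)" and "x \<bullet> (A *v x) \<noteq> 0"
    using assms by (auto simp: copositive_def orthant_face_def)
  then show "0 < x \<bullet> (A *v x)" by linarith
qed

lemma square_dominated_on_face_with_zero:
  fixes A :: "real^'n^'n"
  assumes cop: "copositive A" and y: "y \<in> orthant_face F" "y \<noteq> 0" "y \<bullet> (A *v y) = 0"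
    and "w \<bullet> y = 0"
    and smaller: "\<And>i. 0 < y $ i \<Longrightarrow> square_dominated_on (orthant_face (insert i F)) A w"
  shows "square_dominated_on (orthant_face F) A w"
proof -
  let ?I = "{i. 0 < y $ i}"
  have "\<forall>i\<in>?I. \<exists>c. c > 0 \<and> (\<forall>x\<in>orthant_face (insert i F). c * (w \<bullet> x)\<^sup>2 \<le> x \<bullet> (A *v x))"
    using smaller by (simp add: square_dominated_on_def)
  then obtain cf where cf: "\<forall>i\<in>?I. cf i > 0 \<and>
      (\<forall>x\<in>orthant_face (insert i F). cf i * (w \<bullet> x)\<^sup>2 \<le> x \<bullet> (A *v x))"
    by (rule bchoice[THEN exE])
  have "nonneg_vec y" using y(1) by (simp add: orthant_face_def)
  then have "?I \<noteq> {}"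
    using y(2) by (auto simp: nonneg_vec_def vec_eq_iff less_eq_real_def)
  define c where "c = Min (cf ` ?I)"
  have "c > 0" unfolding c_def using cf \<open>?I \<noteq> {}\<close> by (subst Min_gr_iff) auto
  moreover have "c * (w \<bullet> x)\<^sup>2 \<le> x \<bullet> (A *v x)" if x: "x \<in> orthant_face F" for x
  proof -
    have "nonneg_vec x" using x by (simp add: orthant_face_def)
    then obtain s i where "0 \<le> s" "0 < y $ i" "nonneg_vec (x - s *\<^sub>R y)" "(x - s *\<^sub>R y) $ i = 0"
      using nonneg_shift_to_boundary[OF _ \<open>nonneg_vec y\<close> y(2)] by blast
    then have face: "x - s *\<^sub>R y \<in> orthant_face (insert i F)"
      using x y(1) by (simp add: orthant_face_def)
    have "c * (w \<bullet> x)\<^sup>2 \<le> cf i * (w \<bullet> x)\<^sup>2"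
      unfolding c_def using \<open>0 < y $ i\<close> by (intro mult_right_mono) auto
    also have "\<dots> = cf i * (w \<bullet> (x - s *\<^sub>R y))\<^sup>2"
      using \<open>w \<bullet> y = 0\<close> by (simp add: inner_diff_right)
    also have "\<dots> \<le> (x - s *\<^sub>R y) \<bullet> (A *v (x - s *\<^sub>R y))"
      using cf \<open>0 < y $ i\<close> face by simp
    also have "\<dots> \<le> x \<bullet> (A *v x)"
      using quadratic_form_diff_zero_le cop \<open>nonneg_vec y\<close> y(3) \<open>nonneg_vec x\<close> \<open>0 \<le> s\<close> .
    finally show ?thesis .
  qed
  ultimately show ?thesis unfolding square_dominated_on_def by blast
qed

lemma square_dominated_on_orthant_faces:
  fixes A :: "real^'n^'n"
  assumes cop: "copositive A" and zeros: "\<And>u. is_zero_of A u \<Longrightarrow> w \<bullet> u = 0"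
  shows "square_dominated_on (orthant_face F) A w"
proof (induction F rule: measure_induct_rule[where f = "\<lambda>F. card (- F)"])
  case (less F)
  show ?case
  proof (cases "\<exists>y\<in>orthant_face F. y \<noteq> 0 \<and> y \<bullet> (A *v y) = 0")
    case True
    then obtain y where y: "y \<in> orthant_face F" "y \<noteq> 0" "y \<bullet> (A *v y) = 0" by blast
    then have "w \<bullet> y = 0"
      using zeros by (simp add: is_zero_of_def orthant_face_def)
    moreover have "square_dominated_on (orthant_face (insert i F)) A w" if "0 < y $ i" for i
    proof (rule less)
      have "i \<notin> F" using that y(1) by (auto simp: orthant_face_def)
      then show "card (- insert i F) < card (- F)"
        unfolding Compl_insert by (intro card_Diff1_less) auto
    qed
    ultimately show ?thesis
      using square_dominated_on_face_with_zero[OF cop y] by blast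
  next
    case False
    then show ?thesis
      using square_dominated_on_face_without_zeros[OF cop] by blast
  qed
qed

theorem lemma4p3:
  fixes A :: "real^'n^'n" and w :: "real^'n"
  assumes "copositive A" and "w \<noteq> 0"
  shows "irreducible_wrt A (outer w w) \<longleftrightarrow> (\<exists>u. is_zero_of A u \<and> w \<bullet> u \<noteq> 0)"
proof
  assume irreducible: "irreducible_wrt A (outer w w)"
  show "\<exists>u. is_zero_of A u \<and> w \<bullet> u \<noteq> 0"
  proof (rule ccontr)
    assume "\<nexists>u. is_zero_of A u \<and> w \<bullet> u \<noteq> 0"
    then have "square_dominated_on (orthant_face {}) A w"
      using square_dominated_on_orthant_faces[OF \<open>copositive A\<close>] by blast
    then obtain c where "c > 0" and "\<forall>x. nonneg_vec x \<longrightarrow> c * (w \<bullet> x)\<^sup>2 \<le> x \<bullet> (A *v x)"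
      by (auto simp: square_dominated_on_def orthant_face_def)
    then show False
      using irreducible copositive_minus_outer_iff[OF \<open>copositive A\<close>]
      by (auto simp: irreducible_wrt_def)
  qed
next
  assume "\<exists>u. is_zero_of A u \<and> w \<bullet> u \<noteq> 0"
  then obtain u where u: "is_zero_of A u" and "w \<bullet> u \<noteq> 0" by blast
  show "irreducible_wrt A (outer w w)"
    unfolding irreducible_wrt_def
  proof
    assume "\<exists>\<gamma>>0. copositive (A - \<gamma> *\<^sub>R outer w w)"
    then obtain \<gamma> where "\<gamma> > 0" and "copositive (A - \<gamma> *\<^sub>R outer w w)" by blast
    then have "\<gamma> * (w \<bullet> u)\<^sup>2 \<le> 0"
      using u copositive_minus_outer_iff[OF \<open>copositive A\<close>] by (auto simp: is_zero_of_def)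
    with \<open>\<gamma> > 0\<close> \<open>w \<bullet> u \<noteq> 0\<close> show False
      by (simp add: mult_le_0_iff)
  qed
qed

end
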